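(* Let $U\in\mathcal{P}(n,d)$ and $L^{tr}=\mathbf{e}^d\mathbf{n}^{n-d}$. Set $\mathcal{S}=\{\mathrm{st}(C):C\in\mathcal{P}[U,L^{tr}]\}$, $\mathcal{S}^{\mathbf{e}}=\{\mathrm{st}(C):C\in\mathcal{P}[U,L^{tr}]^{\mathbf{e}}_\circ\}$, $\mathcal{S}^{\mathbf{n}}=\{\mathrm{st}(C):C\in\mathcal{P}[U,L^{tr}]^{\mathbf{n}}_\circ\}$. Then \[ \mathcal{S}=\mathcal{S}^{\mathbf{e}}\cup\mathcal{S}^{\mathbf{n}}\cup\big(n\ast(\mathcal{S}^{\mathbf{e}}\cap\mathcal{S}^{\mathbf{n}})\big). \]
   Context: $\mathcal{P}(n,d)$ is the set of words $C=C_1\cdots C_n$ in letters $\mathbf{e}$ (east) and $\mathbf{n}$ (north) with exactly $d$ letters $\mathbf{e}$. $U$ is weakly above $L$ if every prefix $L_1\cdots L_k$ has at least as many $\mathbf{e}$'s as $U_1\cdots U_k$; $\mathcal{P}[U,L^{tr}]$ is the set of $C\in\mathcal{P}(n,d)$ weakly below $U$ (and weakly above $L^{tr}$, which always holds). $\mathcal{P}[U,L^{tr}]^{\mathbf{e}}_\circ$ (resp. $\mathcal{P}[U,L^{tr}]^{\mathbf{n}}_\circ$) is the set of words $C_1\cdots C_{n-1}$ obtained from $C\in\mathcal{P}[U,L^{tr}]$ with $C_n=\mathbf{e}$ (resp. $C_n=\mathbf{n}$) by deleting the last letter. For any word $C$ in $\mathbf{e},\mathbf{n}$: scan positions left to right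 and mark position $i$ with $C_i=\mathbf{e}$ if the number of $j<i$ with $C_j=\mathbf{n}$ equals the number of $j<i$ with $C_j=\mathbf{e}$ that are unmarked; $\mathrm{st}(C)$ is the set of unmarked positions $i$ with $C_i=\mathbf{e}$. For a collection $K$ of subsets of $[n-1]$, $n\ast K=K\cup\{\sigma\cup\{n\}:\sigma\in K\}$. *)

theory Defs
  imports Main
begin

datatype letter = E | N   (* E = east (e), N = north (n) *)

definition cnt_e :: "letter list \<Rightarrow> nat" where
  "cnt_e w = length (filter (\<lambda>x. x = E) w)"

definition Pnd :: "nat \<Rightarrow> nat \<Rightarrow> letter list set" where
  "Pnd n d = {C. length C = n \<and> cnt_e C = d}"

definition weakly_above :: "letter list \<Rightarrow> letter list \<Rightarrow> bool" where
  "weakly_above U L \<longleftrightarrow> (\<forall>k \<le> length L. cnt_e (take k U) \<le> cnt_e (take k L))"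

definition Pint :: "nat \<Rightarrow> nat \<Rightarrow> letter list \<Rightarrow> letter list \<Rightarrow> letter list set" where
  "Pint n d U L = {C \<in> Pnd n d. weakly_above U C \<and> weakly_above C L}"

definition Pint_circ :: "letter \<Rightarrow> nat \<Rightarrow> nat \<Rightarrow> letter list \<Rightarrow> letter list \<Rightarrow> letter list set" where
  "Pint_circ x n d U L = {butlast C | C. C \<in> Pint n d U L \<and> last C = x}"

text \<open>Marking procedure. Arguments: current (1-based) position, number of n's so far,
  number of unmarked e's so far. Returns the set of unmarked e-positions.\<close>
fun st_aux :: "letter list \<Rightarrow> nat \<Rightarrow> nat \<Rightarrow> nat \<Rightarrow> nat set" where
  "st_aux [] i a b = {}"
| "st_aux (N # w) i a b = st_aux w (Suc i) (Suc a) b"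
| "st_aux (E # w) i a b =
     (if a = b then st_aux w (Suc i) a b else insert i (st_aux w (Suc i) a (Suc b)))"

definition st :: "letter list \<Rightarrow> nat set" where
  "st C = st_aux C 1 0 0"

definition star :: "nat \<Rightarrow> nat set set \<Rightarrow> nat set set" where
  "star n K = K \<union> {\<sigma> \<union> {n} | \<sigma>. \<sigma> \<in> K}"

end

theory Submission
  imports Defs
begin

text \<open>Call the height of a prefix the number of its n's minus the number of its unmarked e's;
  an e is unmarked exactly when the height before it is positive, and then it lowers the height.
  Removing the last letter of C changes st(C) only when C ends in an e read at positive height,
  in which case n is added. Such a word C'e can be traded for a word C''n with st(C'') = st(C'):
  swap the n where the height last leaves 0 with a later e, which is allowed because
  P[U,L^tr] is closed under moving e's forward. The new e is then marked, and the rest of the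
  word runs one level lower without reaching 0, so no other mark changes. Conversely, if
  st(C) = st(D) for words C e and D n of the same length, counting letters shows that C ends at
  positive height, so st(C) \<union> {n} = st(C e) is attained.\<close>

fun st_at :: "letter list \<Rightarrow> nat \<Rightarrow> nat \<Rightarrow> nat set" where
  "st_at [] i h = {}"
| "st_at (N # w) i h = st_at w (Suc i) (Suc h)"
| "st_at (E # w) i h =
     (if h = 0 then st_at w (Suc i) 0 else insert i (st_at w (Suc i) (h - 1)))"

fun height :: "letter list \<Rightarrow> nat \<Rightarrow> nat" where
  "height [] h = h"
| "height (N # w) h = height w (Suc h)"
| "height (E # w) h = height w (h - 1)"

lemma st_aux_eq_st_at: "b \<le> a \<Longrightarrow> st_aux w i a b = st_at w i (a - b)"
proof (induction w arbitrary: i a b)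
  case (Cons x w)
  then show ?case
    by (cases x) (auto simp: Suc_diff_le)
qed simp

lemma st_eq_st_at: "st w = st_at w 1 0"
  by (simp add: st_def st_aux_eq_st_at)

lemma cnt_e_simps [simp]:
  "cnt_e [] = 0"
  "cnt_e (x # xs) = (if x = E then 1 else 0) + cnt_e xs"
  "cnt_e (xs @ ys) = cnt_e xs + cnt_e ys"
  by (auto simp: cnt_e_def)

lemma height_append: "height (u @ v) h = height v (height u h)"
  by (induction u h rule: height.induct) auto

lemma st_at_append: "st_at (u @ v) i h = st_at u i h \<union> st_at v (i + length u) (height u h)"
  by (induction u i h rule: st_at.induct) auto

lemma st_at_ge: "x \<in> st_at w i h \<Longrightarrow> i \<le> x"
  by (induction w i h rule: st_at.induct) (auto split: if_splits)

lemma finite_st_at: "finite (st_at w i h)"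
  by (induction w i h rule: st_at.induct) auto

lemma card_st_at: "card (st_at w i h) + height w h + cnt_e w = h + length w"
proof (induction w i h rule: st_at.induct)
  case (3 w i h)
  have "i \<notin> st_at w (Suc i) (h - 1)"
    using st_at_ge by fastforce
  then show ?case
    using 3 finite_st_at by auto
qed auto

lemma card_st: "card (st w) + height w 0 + cnt_e w = length w"
  using card_st_at[of w 1 0] by (simp add: st_eq_st_at)

lemma st_snoc:
  "st (w @ [x]) = (if x = E \<and> height w 0 \<noteq> 0 then insert (Suc (length w)) (st w) else st w)"
  by (cases x) (auto simp: st_eq_st_at st_at_append)

lemma st_at_Suc_height:
  "height v (Suc h) = Suc (height v h) \<Longrightarrow> st_at v i (Suc h) = st_at v i h"
proof (induction v arbitrary: i h)
  case (Cons x v)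
  then show ?case
    by (cases x; cases h) auto
qed simp

lemma height_snoc: "height (w @ [x]) h = (if x = N then Suc (height w h) else height w h - 1)"
  by (cases x) (auto simp: height_append)

text \<open>The n in the middle is the last step of w leaving height 0.\<close>
lemma split_at_last_zero_height:
  "0 < height w 0 \<Longrightarrow>
     \<exists>u v. w = u @ N # v \<and> height u 0 = 0 \<and> height v 1 = Suc (height v 0)"
proof (induction w rule: rev_induct)
  case (snoc x w)
  show ?case
  proof (cases x)
    case N
    show ?thesis
    proof (cases "height w 0 = 0")
      case True
      then show ?thesis
        using N by (intro exI[of _ w] exI[of _ "[]"]) simp
    next
      case False
      then obtain u v where "w = u @ N # v" "height u 0 = 0" "height v 1 = Suc (height v 0)"
        using snoc.IH by blast
      then show ?thesis
        using N by (intro exI[of _ u] exI[of _ "v @ [N]"]) (simp add: height_snoc)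
    qed
  next
    case E
    then have "1 < height w 0"
      using snoc.prems by (simp add: height_snoc)
    then obtain u v where uv: "w = u @ N # v" "height u 0 = 0" "height v 1 = Suc (height v 0)"
      using snoc.IH by auto
    then have "0 < height v 0"
      using \<open>1 < height w 0\<close> by (simp add: height_append)
    then show ?thesis
      using E uv by (intro exI[of _ u] exI[of _ "v @ [E]"]) (simp add: height_snoc)
  qed
qed simp

lemma st_swap_last_zero:
  assumes "height u 0 = 0" "height v 1 = Suc (height v 0)"
  shows "st (u @ E # v) = st (u @ N # v)"
  using assms st_at_Suc_height[of v 0] by (simp add: st_eq_st_at st_at_append)

definition down_closed :: "letter list set \<Rightarrow> bool" where
  "down_closed P \<longleftrightarrow> (\<forall>u v w. u @ N # v @ E # w \<in> P \<longrightarrow> u @ E # v @ N # w \<in> P)"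

lemma trade_final_E:
  assumes "down_closed P" "C @ [E] \<in> P" "0 < height C 0"
  obtains D where "D @ [N] \<in> P" "st D = st C"
proof -
  obtain u v where uv: "C = u @ N # v" "height u 0 = 0" "height v 1 = Suc (height v 0)"
    using split_at_last_zero_height[OF assms(3)] by blast
  have "u @ E # v @ [N] \<in> P"
    using assms(1,2) uv unfolding down_closed_def by auto
  moreover have "st (u @ E # v) = st C"
    using st_swap_last_zero uv by simp
  ultimately show thesis
    using that[of "u @ E # v"] by simp
qed

lemma height_pos_if_st_eq:
  assumes "length C = length D" "cnt_e D = Suc (cnt_e C)" "st C = st D"
  shows "0 < height C 0"
  using card_st[of C] card_st[of D] assms by simp

context
  fixes P :: "letter list set" and n d :: nat
  assumes P_words: "P \<subseteq> Pnd n d" and n_pos: "1 \<le> n" and P_down_closed: "down_closed P"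
begin

private abbreviation "SE \<equiv> st ` {C. C @ [E] \<in> P}"
private abbreviation "SN \<equiv> st ` {C. C @ [N] \<in> P}"

private lemma length_cnt_e_P: "C \<in> P \<Longrightarrow> length C = n \<and> cnt_e C = d"
  using P_words by (auto simp: Pnd_def)

private lemma st_N_image_subset: "SN \<subseteq> st ` P"
proof
  fix \<sigma> assume "\<sigma> \<in> SN"
  then obtain C where "C @ [N] \<in> P" "\<sigma> = st (C @ [N])"
    by (auto simp: st_snoc)
  then show "\<sigma> \<in> st ` P"
    by blast
qed

private lemma st_E_image_subset: "SE \<subseteq> st ` P"
proof
  fix \<sigma> assume "\<sigma> \<in> SE"
  then obtain C where C: "C @ [E] \<in> P" "\<sigma> = st C"
    by blast
  show "\<sigma> \<in> st ` P"
  proof (cases "height C 0 = 0")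
    case True
    then have "st (C @ [E]) = \<sigma>"
      using C(2) by (simp add: st_snoc)
    then show ?thesis
      using C(1) by blast
  next
    case False
    then obtain D where "D @ [N] \<in> P" "st D = st C"
      using trade_final_E[OF P_down_closed C(1)] by blast
    then have "\<sigma> \<in> SN"
      using C(2) by blast
    then show ?thesis
      using st_N_image_subset by blast
  qed
qed

private lemma insert_n_in_st_image:
  assumes "\<sigma> \<in> SE \<inter> SN"
  shows "\<sigma> \<union> {n} \<in> st ` P"
proof -
  obtain C D where CD: "C @ [E] \<in> P" "D @ [N] \<in> P" "st C = \<sigma>" "st D = \<sigma>"
    using assms by blast
  then have "length C = length D" "cnt_e D = Suc (cnt_e C)"
    using length_cnt_e_P[OF CD(1)] length_cnt_e_P[OF CD(2)] by simp_all
  then have "0 < height C 0"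
    using height_pos_if_st_eq CD(3,4) by simp
  then have "st (C @ [E]) = \<sigma> \<union> {n}"
    using CD(3) length_cnt_e_P[OF CD(1)] by (auto simp: st_snoc)
  then show ?thesis
    using CD(1) by (metis image_eqI)
qed

private lemma st_image_subset: "st ` P \<subseteq> SE \<union> SN \<union> star n (SE \<inter> SN)"
proof
  fix \<sigma> assume "\<sigma> \<in> st ` P"
  then obtain C' where C': "C' \<in> P" "\<sigma> = st C'"
    by blast
  then have "C' \<noteq> []"
    using length_cnt_e_P n_pos by fastforce
  then obtain C x where C: "C @ [x] \<in> P" "\<sigma> = st (C @ [x])"
    using C' by (metis rev_exhaust)
  show "\<sigma> \<in> SE \<union> SN \<union> star n (SE \<inter> SN)"
  proof (cases "x = E \<and> height C 0 \<noteq> 0")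
    case True
    then obtain D where D: "D @ [N] \<in> P" "st D = st C"
      using trade_final_E[OF P_down_closed] C(1) by blast
    have "st C \<in> SE"
      using True C(1) by auto
    moreover have "st C \<in> SN"
      using D by (auto intro: image_eqI[of _ _ D])
    moreover have "\<sigma> = st C \<union> {n}"
      using True C(2) length_cnt_e_P[OF C(1)] by (simp add: st_snoc)
    ultimately show ?thesis
      unfolding star_def by blast
  next
    case False
    then have "\<sigma> = st C"
      using C(2) st_snoc[of C x] by argo
    then show ?thesis
      using C(1) by (cases x) auto
  qed
qed

lemma st_image_down_closed: "st ` P = SE \<union> SN \<union> star n (SE \<inter> SN)"
proof
  have "star n (SE \<inter> SN) \<subseteq> st ` P"
    using st_E_image_subset insert_n_in_st_image unfolding star_def by blast
  then show "SE \<union> SN \<union> star n (SE \<inter> SN) \<subseteq> st ` P"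
    using st_E_image_subset st_N_image_subset by blast
qed (rule st_image_subset)

end

lemma cnt_e_take_le_length: "cnt_e (take k w) \<le> k"
  by (metis cnt_e_def length_filter_le length_take min.bounded_iff nle_le)

lemma cnt_e_take_le: "cnt_e (take k w) \<le> cnt_e w"
  by (induction w arbitrary: k) (auto simp: take_Cons split: nat.splits)

lemma cnt_e_take_swap:
  "cnt_e (take k (u @ N # v @ E # w)) \<le> cnt_e (take k (u @ E # v @ N # w))"
proof (cases "k \<le> length u")
  case False
  then obtain j where k: "k = length u + Suc j"
    by (metis add_Suc_right less_imp_Suc_add not_le)
  have "cnt_e (take j (v @ E # w)) \<le> Suc (cnt_e (take j (v @ N # w)))"
    by (cases "j \<le> length v") (auto simp: take_Cons split: nat.split)
  then show ?thesis
    using k by simp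
qed simp

lemma weakly_above_swap:
  assumes "weakly_above U (u @ N # v @ E # w)"
  shows "weakly_above U (u @ E # v @ N # w)"
  unfolding weakly_above_def
proof (intro allI impI)
  fix k assume "k \<le> length (u @ E # v @ N # w)"
  then have "cnt_e (take k U) \<le> cnt_e (take k (u @ N # v @ E # w))"
    using assms unfolding weakly_above_def by (metis length_append length_Cons)
  then show "cnt_e (take k U) \<le> cnt_e (take k (u @ E # v @ N # w))"
    using cnt_e_take_swap by (rule order_trans)
qed

lemma weakly_above_staircase:
  assumes "C \<in> Pnd n d"
  shows "weakly_above C (replicate d E @ replicate (n - d) N)"
proof -
  have "cnt_e (take k (replicate d E @ replicate (n - d) N)) = min k d" for k
    by (simp add: take_append cnt_e_def min_def)
  moreover have "cnt_e (take k C) \<le> d" for k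
    using assms cnt_e_take_le[of k C] by (simp add: Pnd_def)
  ultimately show ?thesis
    unfolding weakly_above_def by (metis cnt_e_take_le_length min.boundedI)
qed

lemma Pint_staircase:
  "Pint n d U (replicate d E @ replicate (n - d) N) = {C \<in> Pnd n d. weakly_above U C}"
  unfolding Pint_def using weakly_above_staircase by blast

lemma down_closed_Pint_staircase:
  "down_closed (Pint n d U (replicate d E @ replicate (n - d) N))"
  unfolding Pint_staircase down_closed_def Pnd_def by (auto simp: weakly_above_swap)

lemma Pint_circ_eq:
  assumes "1 \<le> n"
  shows "Pint_circ x n d U L = {C. C @ [x] \<in> Pint n d U L}"
proof -
  have "C \<noteq> []" if "C \<in> Pint n d U L" for C
    using that assms by (auto simp: Pint_def Pnd_def)
  then show ?thesis
    unfolding Pint_circ_def by (auto intro!: exI[of _ "_ @ [x]"])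
qed

theorem theorem4p11:
  fixes n d :: nat and U :: "letter list"
  assumes "n \<ge> 1" and "U \<in> Pnd n d"
  defines "Ltr \<equiv> replicate d E @ replicate (n - d) N"
  shows "st ` Pint n d U Ltr =
           st ` Pint_circ E n d U Ltr \<union> st ` Pint_circ N n d U Ltr
           \<union> star n (st ` Pint_circ E n d U Ltr \<inter> st ` Pint_circ N n d U Ltr)"
proof -
  have "Pint n d U Ltr \<subseteq> Pnd n d"
    by (auto simp: Pint_def)
  moreover have "down_closed (Pint n d U Ltr)"
    unfolding Ltr_def by (rule down_closed_Pint_staircase)
  ultimately show ?thesis
    using st_image_down_closed assms(1) by (simp add: Pint_circ_eq)
qed

end
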